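(* Let $G=(V,E)$ be an undirected graph with edge weights $w:E\to[0,1]$, node demands $x:V\to[0,1]$, and distinct node lengths $d(v)$, such that \[\forall u\in V:\quad x(u)+\sum_{\{v\in V:d(v)>d(u)\}}w(v,u)\,x(v)\le1.\] Then for every positive integer $T$ there is a multi-coloring $\pi:V\to2^{\{0,\dots,T-1\}}$ such that (1) for every $c\in\{0,\dots,T-1\}$ and every $u\in\pi^{-1}(c)$: $\sum_{\{v\in\pi^{-1}(c):d(v)>d(u)\}}w(v,u)\le1$; (2) for every $u\in V$: $|\pi(u)|\ge\lfloor x(u)\cdot T\rfloor$.
   Context: $\pi^{-1}(c)=\{v\in V: c\in\pi(v)\}$. For $u,v\in V$, $w(v,u)$ denotes the weight of the edge $\{u,v\}$ (taken to be $0$ if $\{u,v\}\notin E$). *)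

theory Defs
  imports Main Complex_Main
begin

definition undirected_graph :: "'v set \<Rightarrow> 'v set set \<Rightarrow> bool" where
  "undirected_graph V E \<longleftrightarrow> finite V \<and> (\<forall>e\<in>E. \<exists>u v. u \<in> V \<and> v \<in> V \<and> u \<noteq> v \<and> e = {u, v})"

definition wt :: "'v set set \<Rightarrow> ('v set \<Rightarrow> real) \<Rightarrow> 'v \<Rightarrow> 'v \<Rightarrow> real" where
  "wt E w v u = (if {u, v} \<in> E then w {u, v} else 0)"

definition color_class :: "('v \<Rightarrow> nat set) \<Rightarrow> 'v set \<Rightarrow> nat \<Rightarrow> 'v set" where
  "color_class \<pi> V c = {v \<in> V. c \<in> \<pi> v}"

end

theory Submission
  imports Defs
begin

text \<open>Colour the vertices greedily in order of decreasing length. When vertex \<open>u\<close> is reached,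
  every vertex counting towards its constraints is already coloured, and the load of colour \<open>c\<close>
  at \<open>u\<close> is the total weight of the longer vertices holding \<open>c\<close>. Summed over all colours
  this is \<open>\<Sum>\<^sub>v w(v,u) |\<pi>(v)| \<le> T \<Sum>\<^sub>v w(v,u) x(v) \<le> T (1 - x(u))\<close>, so fewer than
  \<open>T (1 - x(u))\<close> colours are overloaded and at least \<open>\<lfloor>x(u) T\<rfloor>\<close> remain available for \<open>u\<close>.\<close>

lemma sum_over_colour_classes:
  fixes g :: "'v \<Rightarrow> 'a::comm_semiring_1"
  assumes "finite S" "finite C" "\<forall>v\<in>S. P v \<subseteq> C"
  shows "(\<Sum>c\<in>C. \<Sum>v\<in>{v\<in>S. c \<in> P v}. g v) = (\<Sum>v\<in>S. g v * of_nat (card (P v)))"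
proof -
  have "(\<Sum>c\<in>C. \<Sum>v\<in>{v\<in>S. c \<in> P v}. g v) = (\<Sum>v\<in>S. \<Sum>c\<in>{c\<in>C. c \<in> P v}. g v)"
    using assms(2,1) by (rule sum.swap_restrict)
  also have "\<dots> = (\<Sum>v\<in>S. g v * of_nat (card (P v)))"
  proof (rule sum.cong[OF refl])
    fix v assume "v \<in> S"
    then have "{c\<in>C. c \<in> P v} = P v" using assms(3) by auto
    then show "(\<Sum>c\<in>{c\<in>C. c \<in> P v}. g v) = g v * of_nat (card (P v))"
      by (simp add: mult.commute)
  qed
  finally show ?thesis .
qed

lemma card_overloaded_le_sum:
  fixes load :: "'c \<Rightarrow> real"
  assumes "finite A" "\<forall>c\<in>A. 0 \<le> load c"
  shows "real (card {c\<in>A. load c > 1}) \<le> (\<Sum>c\<in>A. load c)"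
proof -
  have "real (card {c\<in>A. load c > 1}) = (\<Sum>c\<in>{c\<in>A. load c > 1}. 1)" by simp
  also have "\<dots> \<le> (\<Sum>c\<in>{c\<in>A. load c > 1}. load c)" by (rule sum_mono) simp
  also have "\<dots> \<le> (\<Sum>c\<in>A. load c)" using assms by (intro sum_mono2) auto
  finally show ?thesis .
qed

lemma exists_light_colours:
  fixes load :: "nat \<Rightarrow> real"
  assumes "\<forall>c<T. 0 \<le> load c" and "real k + (\<Sum>c<T. load c) \<le> real T"
  shows "\<exists>C\<subseteq>{..<T}. card C = k \<and> (\<forall>c\<in>C. load c \<le> 1)"
proof -
  define heavy where "heavy = {c\<in>{..<T}. load c > 1}"
  define light where "light = {..<T} - heavy"
  have "real (card heavy) \<le> (\<Sum>c<T. load c)"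
    unfolding heavy_def using assms(1) by (intro card_overloaded_le_sum) auto
  moreover have "card light = T - card heavy"
    unfolding light_def by (subst card_Diff_subset) (auto simp: heavy_def)
  ultimately have "k \<le> card light" using assms(2) by linarith
  then obtain C where "C \<subseteq> light" "card C = k" by (rule obtain_subset_with_card_n)
  then show ?thesis unfolding light_def heavy_def by (intro exI[of _ C]) auto
qed

definition feasible_multicolouring ::
    "nat \<Rightarrow> ('v \<Rightarrow> 'v \<Rightarrow> real) \<Rightarrow> ('v \<Rightarrow> real) \<Rightarrow> 'v set \<Rightarrow> ('v \<Rightarrow> nat) \<Rightarrow> ('v \<Rightarrow> nat set) \<Rightarrow> bool"
  where "feasible_multicolouring T a d S k \<pi> \<longleftrightarrow>
    (\<forall>v. \<pi> v \<subseteq> {..<T}) \<and> (\<forall>v\<in>S. card (\<pi> v) = k v)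
    \<and> (\<forall>c. \<forall>u\<in>S. c \<in> \<pi> u \<longrightarrow> (\<Sum>v\<in>{v\<in>S. c \<in> \<pi> v \<and> d u < d v}. a v u) \<le> 1)"

lemma feasible_multicolouring_insert_shortest:
  assumes feasible: "feasible_multicolouring T a d S k \<pi>"
    and "finite S" "u \<notin> S" and shortest: "\<forall>v\<in>S. d u \<le> d v"
    and "\<forall>v\<in>S. 0 \<le> a v u"
    and demand: "real (k u) + (\<Sum>v\<in>{v\<in>S. d u < d v}. a v u * real (k v)) \<le> real T"
  shows "\<exists>C. feasible_multicolouring T a d (insert u S) k (\<pi>(u := C))"
proof -
  note range = feasible[unfolded feasible_multicolouring_def, THEN conjunct1]
  define longer where "longer = {v\<in>S. d u < d v}"
  define load where "load c = (\<Sum>v\<in>{v\<in>longer. c \<in> \<pi> v}. a v u)" for c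
  have "(\<Sum>c<T. load c) = (\<Sum>v\<in>longer. a v u * real (card (\<pi> v)))"
    unfolding load_def using \<open>finite S\<close> range
    by (intro sum_over_colour_classes) (auto simp: longer_def)
  also have "\<dots> = (\<Sum>v\<in>longer. a v u * real (k v))"
    using feasible by (intro sum.cong) (auto simp: longer_def feasible_multicolouring_def)
  finally have total_load: "real (k u) + (\<Sum>c<T. load c) \<le> real T"
    using demand by (simp add: longer_def)
  have "\<forall>c<T. 0 \<le> load c"
    using \<open>\<forall>v\<in>S. 0 \<le> a v u\<close> by (auto simp: load_def longer_def intro!: sum_nonneg)
  then obtain C where "C \<subseteq> {..<T}" "card C = k u" and light: "\<forall>c\<in>C. load c \<le> 1"
    using exists_light_colours[OF _ total_load] by blast
  have "{v\<in>insert u S. c \<in> (\<pi>(u := C)) v \<and> d u < d v} = {v\<in>longer. c \<in> \<pi> v}" for c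
    using \<open>u \<notin> S\<close> by (auto simp: longer_def)
  then have "c \<in> C \<Longrightarrow> (\<Sum>v\<in>{v\<in>insert u S. c \<in> (\<pi>(u := C)) v \<and> d u < d v}. a v u) \<le> 1" for c
    using light by (simp add: load_def)
  \<comment> \<open>The new vertex is the shortest, so it does not count towards the constraints of \<open>S\<close>.\<close>
  moreover have "{v\<in>insert u S. c \<in> (\<pi>(u := C)) v \<and> d u' < d v} = {v\<in>S. c \<in> \<pi> v \<and> d u' < d v}"
    if "u' \<in> S" for c u'
    using \<open>u \<notin> S\<close> bspec[OF shortest that] by auto
  ultimately show ?thesis
    using feasible \<open>C \<subseteq> {..<T}\<close> \<open>card C = k u\<close> \<open>u \<notin> S\<close>
    by (intro exI[of _ C]) (auto simp: feasible_multicolouring_def)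
qed

lemma greedy_multicolouring:
  assumes "finite S"
    and "\<forall>u\<in>S. \<forall>v\<in>S. 0 \<le> a v u"
    and "\<forall>u\<in>S. real (k u) + (\<Sum>v\<in>{v\<in>S. d u < d v}. a v u * real (k v)) \<le> real T"
  shows "\<exists>\<pi>. feasible_multicolouring T a d S k \<pi>"
  using assms
proof (induction S rule: finite_ranking_induct[where f = "\<lambda>v. - d v"])
  case empty
  show ?case by (auto simp: feasible_multicolouring_def)
next
  case (insert u S)
  show ?case
  proof (cases "u \<in> S")
    case True
    then show ?thesis using insert by (simp add: insert_absorb)
  next
    case False
    have shortest: "\<forall>v\<in>S. d u \<le> d v"
      using insert.hyps(2) by force
    have "{w\<in>insert u S. d v < d w} = {w\<in>S. d v < d w}" if "v \<in> S" for v
      using shortest that by force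
    then obtain \<pi> where feasible: "feasible_multicolouring T a d S k \<pi>"
      using insert.IH insert.prems by auto
    have "{v\<in>insert u S. d u < d v} = {v\<in>S. d u < d v}" by auto
    then have "real (k u) + (\<Sum>v\<in>{v\<in>S. d u < d v}. a v u * real (k v)) \<le> real T"
      using bspec[OF insert.prems(2) insertI1] by simp
    then obtain C where "feasible_multicolouring T a d (insert u S) k (\<pi>(u := C))"
      using feasible_multicolouring_insert_shortest[OF feasible insert.hyps(1) False shortest] insert.prems(1)
      by blast
    then show ?thesis by blast
  qed
qed

lemma floor_scaled_demand_le:
  fixes a x :: "'v \<Rightarrow> real" and T :: nat
  assumes "0 \<le> x u" and "\<forall>v\<in>A. 0 \<le> x v \<and> 0 \<le> a v"
    and "x u + (\<Sum>v\<in>A. a v * x v) \<le> 1"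
  shows "real (nat \<lfloor>x u * real T\<rfloor>) + (\<Sum>v\<in>A. a v * real (nat \<lfloor>x v * real T\<rfloor>)) \<le> real T"
proof -
  have floor_le: "real (nat \<lfloor>y * real T\<rfloor>) \<le> y * real T" if "0 \<le> y" for y
    using that by simp
  have "(\<Sum>v\<in>A. a v * real (nat \<lfloor>x v * real T\<rfloor>)) \<le> (\<Sum>v\<in>A. a v * (x v * real T))"
    using assms(2) floor_le by (intro sum_mono mult_left_mono) auto
  also have "\<dots> = real T * (\<Sum>v\<in>A. a v * x v)"
    by (simp add: sum_distrib_left algebra_simps)
  also have "\<dots> \<le> real T * (1 - x u)"
    using assms(3) by (intro mult_left_mono) auto
  finally show ?thesis using floor_le[OF assms(1)] by (simp add: algebra_simps)
qed

theorem lemma5: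
  fixes V :: "'v set" and E :: "'v set set" and w :: "'v set \<Rightarrow> real"
    and x :: "'v \<Rightarrow> real" and d :: "'v \<Rightarrow> real" and T :: nat
  assumes "undirected_graph V E"
    and "\<forall>e\<in>E. 0 \<le> w e \<and> w e \<le> 1"
    and "\<forall>v\<in>V. 0 \<le> x v \<and> x v \<le> 1"
    and "inj_on d V"
    and "\<forall>u\<in>V. x u + (\<Sum>v\<in>{v\<in>V. d v > d u}. wt E w v u * x v) \<le> 1"
    and "T > 0"
  shows "\<exists>\<pi> :: 'v \<Rightarrow> nat set. (\<forall>v\<in>V. \<pi> v \<subseteq> {0..<T})
     \<and> (\<forall>c\<in>{0..<T}. \<forall>u\<in>color_class \<pi> V c.
           (\<Sum>v\<in>{v\<in>color_class \<pi> V c. d v > d u}. wt E w v u) \<le> 1)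
     \<and> (\<forall>u\<in>V. real (card (\<pi> u)) \<ge> of_int \<lfloor>x u * real T\<rfloor>)"
proof -
  have wt_nonneg: "0 \<le> wt E w v u" for u v
    using assms(2) by (simp add: wt_def)
  have demand: "\<forall>u\<in>V. real (nat \<lfloor>x u * real T\<rfloor>)
      + (\<Sum>v\<in>{v\<in>V. d u < d v}. wt E w v u * real (nat \<lfloor>x v * real T\<rfloor>)) \<le> real T"
    by (intro ballI floor_scaled_demand_le) (use assms(3,5) wt_nonneg in auto)
  have "finite V" using assms(1) by (simp add: undirected_graph_def)
  then obtain \<pi> where "feasible_multicolouring T (wt E w) d V (\<lambda>v. nat \<lfloor>x v * real T\<rfloor>) \<pi>"
    using greedy_multicolouring[OF _ _ demand] wt_nonneg by blast
  moreover have "{v\<in>color_class \<pi> V c. d v > d u} = {v\<in>V. c \<in> \<pi> v \<and> d u < d v}" for c u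
    by (auto simp: color_class_def)
  ultimately show ?thesis
    by (intro exI[of _ \<pi>]) (auto simp: feasible_multicolouring_def color_class_def atLeast0LessThan)
qed

end
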